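(* Let $T\in(0,\infty)$, $n\in\mathbb N$, $s\in[0,T)$, $t\in[0,s]$, and let $\psi\colon[0,T]\to[0,\infty]$ be non-increasing. Then $$\sum_{r\in[s,T]}q^{n,[s,T]}(r)\,\psi(r)\le\sum_{r\in[t,T]}q^{n,[t,T]}(r)\,\psi(r).$$
   Context: For $n\in\mathbb N$ let $c^n_1,\dots,c^n_n\in[-1,1]$ be the $n$ distinct roots of the Legendre polynomial $x\mapsto\frac{1}{2^nn!}\frac{d^n}{dx^n}[(x^2-1)^n]$. For $a\in\mathbb R$, $b\in[a,\infty)$ let $q^{n,[a,b]}\colon[a,b]\to\mathbb R$ be $q^{n,[a,b]}(t)=\int_a^b\prod_{i\in\{1,\dots,n\},\,c^n_i\neq\frac{2t-(a+b)}{b-a}}\frac{2x-(b-a)c^n_i-(a+b)}{2t-(b-a)c^n_i-(a+b)}\,dx$ if $a<b$ and $\frac{2t-(a+b)}{b-a}\in\{c^n_1,\dots,c^n_n\}$, and $q^{n,[a,b]}(t)=0$ otherwise (Gauss–Legendre weights with $n$ nodes on $[a,b]$). Sums $\sum_{r\in[a,b]}$ range over the finitely many $r$ with nonzero weight; convention $0\cdot\infty=0$. *)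

theory Defs
  imports "HOL-Analysis.Analysis" "HOL-Computational_Algebra.Polynomial"
begin

definition legendre :: "nat \<Rightarrow> real poly" where
  "legendre n = smult (1 / (2 ^ n * fact n)) ((pderiv ^^ n) ([:-1, 0, 1:] ^ n))"

definition legendre_roots :: "nat \<Rightarrow> real set" where
  "legendre_roots n = {x. poly (legendre n) x = 0}"

definition gl_weight :: "nat \<Rightarrow> real \<Rightarrow> real \<Rightarrow> real \<Rightarrow> real" where
  "gl_weight n a b t =
     (if a < b \<and> (2 * t - (a + b)) / (b - a) \<in> legendre_roots n then
        integral {a..b} (\<lambda>x. \<Prod>c \<in> legendre_roots n - {(2 * t - (a + b)) / (b - a)}.
            (2 * x - (b - a) * c - (a + b)) / (2 * t - (b - a) * c - (a + b)))
      else 0)"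

text \<open>Quadrature sum over the finitely many r in [a,b] with nonzero weight;
  values in [0,\<infinity>] are represented in ereal, where 0 * \<infinity> = 0.\<close>
definition gl_sum :: "nat \<Rightarrow> real \<Rightarrow> real \<Rightarrow> (real \<Rightarrow> ereal) \<Rightarrow> ereal" where
  "gl_sum n a b \<psi> = (\<Sum>r \<in> {r \<in> {a..b}. gl_weight n a b r \<noteq> 0}. ereal (gl_weight n a b r) * \<psi> r)"

end

theory Submission
  imports Defs
begin

text \<open>
  The substitution \<open>r = (a + b)/2 + (b - a)/2 \<cdot> c\<close> identifies the nodes on \<open>[a, b]\<close> with the
  roots \<open>c\<close> of the Legendre polynomial \<open>P\<^sub>n\<close>, and turns the weight of that node into
  \<open>(b - a)/2 \<cdot> w\<^sub>c\<close>, where \<open>w\<^sub>c = \<integral>\<^sub>-\<^sub>1\<^sup>1 \<ell>\<^sub>c\<close> is the integral of the Lagrange basis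
  polynomial of the root \<open>c\<close>. These reference weights are nonnegative: \<open>\<ell>\<^sub>c\<^sup>2 - \<ell>\<^sub>c\<close> vanishes at
  all \<open>n\<close> roots, so it is a multiple of \<open>P\<^sub>n\<close> by a polynomial of degree \<open>< n\<close>, and orthogonality
  of \<open>P\<^sub>n\<close> to lower degrees gives \<open>w\<^sub>c = \<integral>\<^sub>-\<^sub>1\<^sup>1 \<ell>\<^sub>c\<^sup>2 \<ge> 0\<close>. Since the roots lie in \<open>(-1, 1)\<close>
  (Rolle's theorem applied to the derivatives of \<open>(x\<^sup>2 - 1)\<^sup>n\<close>), passing from \<open>[t, T]\<close> to
  \<open>[s, T]\<close> shrinks every weight and moves every node to the right, where \<open>\<psi>\<close> is smaller.
\<close>

lemma poly_Rolle:
  fixes p :: "real poly"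
  assumes "a < b" "poly p a = 0" "poly p b = 0"
  obtains z where "a < z" "z < b" "poly (pderiv p) z = 0"
proof -
  have "continuous_on {a..b} (poly p)"
    by (auto intro!: continuous_intros)
  then obtain z where z: "a < z" "z < b" "DERIV (poly p) z :> 0"
    using Rolle[of a b "poly p"] assms by (metis poly_DERIV real_differentiable_def)
  then show ?thesis
    using that DERIV_unique[OF z(3) poly_DERIV] by auto
qed

lemma pderiv_roots_between:
  fixes p :: "real poly"
  shows "finite Z \<Longrightarrow> card Z = Suc m \<Longrightarrow> \<forall>z\<in>Z. poly p z = 0 \<Longrightarrow>
    \<exists>Z'. finite Z' \<and> Z' \<subseteq> {Min Z<..<Max Z} \<and> card Z' = m \<and> (\<forall>z\<in>Z'. poly (pderiv p) z = 0)"
proof (induction m arbitrary: Z)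
  case 0
  then show ?case
    by (intro exI[of _ "{}"]) auto
next
  case (Suc m)
  define Z0 where "Z0 = Z - {Max Z}"
  have Max_Z: "Max Z \<in> Z"
    using Suc.prems by (intro Max_in) auto
  have Z0: "finite Z0" "card Z0 = Suc m"
    using Suc.prems Max_Z by (simp_all add: Z0_def)
  then have "Z0 \<noteq> {}"
    by auto
  obtain Z' where Z': "finite Z'" "Z' \<subseteq> {Min Z0<..<Max Z0}" "card Z' = m"
      "\<forall>z\<in>Z'. poly (pderiv p) z = 0"
    using Suc.IH[OF Z0(1,2)] Suc.prems(3) by (auto simp: Z0_def)
  have Max_Z0: "Max Z0 \<in> Z0"
    using Z0 \<open>Z0 \<noteq> {}\<close> by auto
  then have "Max Z0 < Max Z"
    using Suc.prems(1) by (metis DiffE Max_ge Z0_def insertI1 order_le_imp_less_or_eq)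
  then obtain z where z: "Max Z0 < z" "z < Max Z" "poly (pderiv p) z = 0"
    using poly_Rolle Max_Z Max_Z0 Suc.prems(3) by (metis DiffD1 Z0_def)
  have "Min Z \<le> Min Z0"
    using Suc.prems(1) \<open>Z0 \<noteq> {}\<close> by (intro Min_antimono) (auto simp: Z0_def)
  moreover have "Min Z0 \<le> Max Z0"
    using Z0(1) Max_Z0 by (rule Min_le)
  ultimately have "insert z Z' \<subseteq> {Min Z<..<Max Z}"
    using Z'(2) z by auto
  moreover have "z \<notin> Z'"
    using Z'(2) z by auto
  ultimately show ?case
    using Z' z by (intro exI[of _ "insert z Z'"]) auto
qed

lemma linear_power_dvd_pderiv:
  fixes p :: "'a::idom poly"
  assumes "[:-a, 1:] ^ Suc m dvd p"
  shows "[:-a, 1:] ^ m dvd pderiv p"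
proof -
  obtain q where q: "p = [:-a, 1:] ^ Suc m * q"
    using assms by (rule dvdE)
  have "pderiv p = [:-a, 1:] ^ m * ([:-a, 1:] * pderiv q + smult (of_nat (Suc m)) q)"
    unfolding q pderiv_mult pderiv_power_Suc by (simp add: algebra_simps pderiv_pCons)
  then show ?thesis
    by simp
qed

definition rodrigues_deriv :: "nat \<Rightarrow> nat \<Rightarrow> real poly" where
  "rodrigues_deriv n k = (pderiv ^^ k) ([:-1, 0, 1:] ^ n)"

lemma legendre_eq_rodrigues_deriv: "legendre n = smult (1 / (2 ^ n * fact n)) (rodrigues_deriv n n)"
  by (simp add: legendre_def rodrigues_deriv_def)

lemma linear_power_dvd_rodrigues_deriv:
  assumes "a = 1 \<or> a = -1" "k \<le> n"
  shows "[:-a, 1:] ^ (n - k) dvd rodrigues_deriv n k"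
  using assms(2)
proof (induction k)
  case 0
  have "([:-1, 0, 1:] :: real poly) ^ n = [:-a, 1:] ^ n * [:a, 1:] ^ n"
    using assms(1) by (auto simp: power_mult_distrib[symmetric])
  then show ?case
    by (simp add: rodrigues_deriv_def)
next
  case (Suc k)
  then have "[:-a, 1:] ^ Suc (n - Suc k) dvd rodrigues_deriv n k"
    by (simp add: Suc_diff_Suc)
  then show ?case
    by (simp add: rodrigues_deriv_def linear_power_dvd_pderiv)
qed

lemma poly_rodrigues_deriv_endpoint:
  assumes "a = 1 \<or> a = -1" "k < n"
  shows "poly (rodrigues_deriv n k) a = 0"
proof -
  have "[:-a, 1:] dvd rodrigues_deriv n k"
    using linear_power_dvd_rodrigues_deriv[OF assms(1), of k n] assms(2)
    by (meson dvd_power dvd_trans less_imp_le zero_less_diff)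
  then show ?thesis
    by (simp add: poly_eq_0_iff_dvd)
qed

lemma degree_rodrigues_deriv:
  "k \<le> 2 * n \<Longrightarrow> rodrigues_deriv n k \<noteq> 0 \<and> degree (rodrigues_deriv n k) = 2 * n - k"
proof (induction k)
  case 0
  have "([:-1, 0, 1:] :: real poly) \<noteq> 0"
    by simp
  then show ?case
    by (simp add: rodrigues_deriv_def degree_power_eq)
next
  case (Suc k)
  then show ?case
    by (simp add: rodrigues_deriv_def degree_pderiv pderiv_eq_0_iff)
qed

lemma rodrigues_deriv_roots:
  "k \<le> n \<Longrightarrow> \<exists>S. finite S \<and> S \<subseteq> {-1<..<1} \<and> card S = k \<and> (\<forall>x\<in>S. poly (rodrigues_deriv n k) x = 0)"
proof (induction k)
  case 0
  then show ?case
    by (intro exI[of _ "{}"]) auto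
next
  case (Suc k)
  then obtain S where S: "finite S" "S \<subseteq> {-1<..<1}" "card S = k"
      "\<forall>x\<in>S. poly (rodrigues_deriv n k) x = 0"
    by auto
  define Z where "Z = insert (-1) (insert 1 S)"
  have "-1 \<notin> S" "1 \<notin> S"
    using S(2) by auto
  then have Z: "finite Z" "card Z = Suc (Suc k)"
    using S by (simp_all add: Z_def)
  have "Min Z = -1"
    using Z(1) S(2) by (intro Min_eqI) (auto simp: Z_def)
  moreover have "Max Z = 1"
    using Z(1) S(2) by (intro Max_eqI) (auto simp: Z_def)
  moreover have "\<forall>z\<in>Z. poly (rodrigues_deriv n k) z = 0"
    using S Suc.prems poly_rodrigues_deriv_endpoint[of _ k n] by (auto simp: Z_def)
  ultimately obtain S' where "finite S'" "S' \<subseteq> {-1<..<1}" "card S' = Suc k"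
      "\<forall>x\<in>S'. poly (pderiv (rodrigues_deriv n k)) x = 0"
    using pderiv_roots_between[OF Z] by metis
  then show ?case
    by (intro exI[of _ S']) (simp add: rodrigues_deriv_def)
qed

lemma legendre_roots_eq: "legendre_roots n = {x. poly (rodrigues_deriv n n) x = 0}"
  by (simp add: legendre_roots_def legendre_eq_rodrigues_deriv)

lemma
  shows finite_legendre_roots: "finite (legendre_roots n)"
    and card_legendre_roots: "card (legendre_roots n) = n"
    and legendre_roots_subset: "legendre_roots n \<subseteq> {-1<..<1}"
proof -
  have P: "rodrigues_deriv n n \<noteq> 0" "degree (rodrigues_deriv n n) = n"
    using degree_rodrigues_deriv[of n n] by auto
  obtain S where S: "finite S" "S \<subseteq> {-1<..<1}" "card S = n"
      "\<forall>x\<in>S. poly (rodrigues_deriv n n) x = 0"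
    using rodrigues_deriv_roots[of n n] by auto
  show fin: "finite (legendre_roots n)"
    unfolding legendre_roots_eq using poly_roots_finite[OF P(1)] .
  have "card (legendre_roots n) \<le> n"
    unfolding legendre_roots_eq using card_poly_roots_bound[OF P(1)] P(2) by simp
  moreover have "S \<subseteq> legendre_roots n"
    using S(4) by (auto simp: legendre_roots_eq)
  ultimately have "S = legendre_roots n"
    using S(3) fin by (metis card_seteq)
  then show "card (legendre_roots n) = n" "legendre_roots n \<subseteq> {-1<..<1}"
    using S by auto
qed

lemma dvd_if_vanishes_on_roots:
  fixes p q :: "'a::field poly"
  assumes "p \<noteq> 0" "finite R" "card R = degree p"
    and "\<forall>x\<in>R. poly p x = 0" "\<forall>x\<in>R. poly q x = 0"
  shows "p dvd q"
proof (rule ccontr)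
  assume "\<not> p dvd q"
  then have r: "q mod p \<noteq> 0"
    by (simp add: mod_eq_0_iff_dvd)
  have "poly (q mod p) x = 0" if "x \<in> R" for x
  proof -
    have "poly q x = poly (q div p) x * poly p x + poly (q mod p) x"
      by (metis div_mult_mod_eq poly_add poly_mult)
    then show ?thesis
      using that assms(4,5) by simp
  qed
  then have "card R \<le> card {x. poly (q mod p) x = 0}"
    using poly_roots_finite[OF r] by (intro card_mono) auto
  also have "\<dots> \<le> degree (q mod p)"
    using card_poly_roots_bound[OF r] .
  also have "\<dots> < degree p"
    using degree_mod_less'[OF assms(1) r] .
  finally show False
    using assms(3) by simp
qed

lemma integrable_poly: "poly (p :: real poly) integrable_on {a..b}"
  by (intro integrable_continuous_interval) (auto intro!: continuous_intros)

definition poly_integral :: "real poly \<Rightarrow> real" where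
  "poly_integral p = integral {-1..1} (poly p)"

lemma has_integral_poly_integral: "(poly p has_integral poly_integral p) {-1..1}"
  unfolding poly_integral_def using integrable_poly by (simp add: integrable_integral)

lemma poly_integral_add: "poly_integral (p + q) = poly_integral p + poly_integral q"
  unfolding poly_integral_def poly_add by (intro integral_add integrable_poly)

lemma poly_integral_diff: "poly_integral (p - q) = poly_integral p - poly_integral q"
  unfolding poly_integral_def poly_diff by (intro integral_diff integrable_poly)

lemma poly_integral_pderiv: "poly_integral (pderiv p) = poly p 1 - poly p (-1)"
proof -
  have "(poly (pderiv p) has_integral (poly p 1 - poly p (-1))) {-1..1}"
    by (rule fundamental_theorem_of_calculus)
      (auto simp: has_real_derivative_iff_has_vector_derivative[symmetric]
        intro: has_field_derivative_at_within poly_DERIV)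
  then show ?thesis
    unfolding poly_integral_def by (rule integral_unique)
qed

lemma poly_integral_by_parts:
  "poly_integral (pderiv p * q) =
     poly p 1 * poly q 1 - poly p (-1) * poly q (-1) - poly_integral (p * pderiv q)"
  using poly_integral_pderiv[of "p * q"]
  by (simp add: pderiv_mult poly_integral_add mult.commute)

text \<open>Integrating by parts \<open>k\<close> times moves all derivatives onto \<open>q\<close>; the boundary terms vanish
  because \<open>\<plusminus>1\<close> are roots of order \<open>n\<close> of \<open>(x\<^sup>2 - 1)\<^sup>n\<close>.\<close>
lemma rodrigues_deriv_orthogonal:
  "k \<le> n \<Longrightarrow> q = 0 \<or> degree q < k \<Longrightarrow> poly_integral (rodrigues_deriv n k * q) = 0"
proof (induction k arbitrary: q)
  case 0
  have "poly (0 :: real poly) = (\<lambda>_. 0)"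
    by (simp add: fun_eq_iff)
  with 0 show ?case
    by (simp add: poly_integral_def)
next
  case (Suc k)
  have "pderiv q = 0 \<or> degree (pderiv q) < k"
    using Suc.prems by (cases "degree q = 0") (auto simp: pderiv_eq_0_iff degree_pderiv)
  then have "poly_integral (rodrigues_deriv n k * pderiv q) = 0"
    using Suc by auto
  moreover have "rodrigues_deriv n (Suc k) = pderiv (rodrigues_deriv n k)"
    by (simp add: rodrigues_deriv_def)
  ultimately show ?case
    using poly_integral_by_parts[of "rodrigues_deriv n k" q]
      poly_rodrigues_deriv_endpoint[of _ k n] Suc.prems by simp
qed

definition lagrange_basis :: "real set \<Rightarrow> real \<Rightarrow> real poly" where
  "lagrange_basis R c = (\<Prod>d\<in>R - {c}. [:-d / (c - d), 1 / (c - d):])"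

lemma poly_lagrange_basis: "poly (lagrange_basis R c) x = (\<Prod>d\<in>R - {c}. (x - d) / (c - d))"
  unfolding lagrange_basis_def poly_prod
  by (rule prod.cong) (auto simp: diff_divide_distrib)

lemma poly_lagrange_basis_node:
  assumes "finite R" "x \<in> R"
  shows "poly (lagrange_basis R c) x = (if x = c then 1 else 0)"
  using assms by (auto simp: poly_lagrange_basis prod_zero_iff intro!: bexI[of _ x])

lemma degree_lagrange_basis: "finite R \<Longrightarrow> degree (lagrange_basis R c) \<le> card (R - {c})"
proof -
  assume "finite R"
  then have "degree (lagrange_basis R c) \<le> sum (degree \<circ> (\<lambda>d. [:-d / (c - d), 1 / (c - d):])) (R - {c})"
    unfolding lagrange_basis_def by (intro degree_prod_sum_le) auto
  also have "\<dots> \<le> (\<Sum>d\<in>R - {c}. 1)"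
    by (intro sum_mono) auto
  finally show ?thesis
    by simp
qed

definition legendre_weight :: "nat \<Rightarrow> real \<Rightarrow> real" where
  "legendre_weight n c = poly_integral (lagrange_basis (legendre_roots n) c)"

lemma legendre_weight_nonneg:
  assumes c: "c \<in> legendre_roots n"
  shows "0 \<le> legendre_weight n c"
proof -
  let ?R = "legendre_roots n"
  let ?L = "lagrange_basis ?R c"
  let ?P = "rodrigues_deriv n n"
  define H where "H = ?L * ?L - ?L"
  have n: "n \<ge> 1"
    using c finite_legendre_roots card_legendre_roots[of n] by (cases n) auto
  have P: "?P \<noteq> 0" "degree ?P = n"
    using degree_rodrigues_deriv[of n n] by auto
  have "\<forall>x\<in>?R. poly H x = 0"
    by (simp add: H_def poly_lagrange_basis_node finite_legendre_roots)
  then have "?P dvd H"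
    using dvd_if_vanishes_on_roots[OF P(1) finite_legendre_roots] P(2) card_legendre_roots
    by (simp add: legendre_roots_eq)
  then obtain Q where Q: "H = ?P * Q"
    by (rule dvdE)
  have "degree ?L \<le> n - 1"
    using degree_lagrange_basis[OF finite_legendre_roots, of n c] c
      card_legendre_roots[of n] finite_legendre_roots[of n] by simp
  moreover have "degree (?L * ?L) \<le> 2 * (n - 1)"
    using degree_mult_le[of ?L ?L] \<open>degree ?L \<le> n - 1\<close> by linarith
  ultimately have "degree H \<le> 2 * (n - 1)"
    unfolding H_def by (intro degree_diff_le) linarith+
  have "degree Q < n" if "Q \<noteq> 0"
  proof -
    have "degree H = n + degree Q"
      using Q P that by (simp add: degree_mult_eq)
    then show ?thesis
      using \<open>degree H \<le> 2 * (n - 1)\<close> n by linarith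
  qed
  then have "poly_integral H = 0"
    using rodrigues_deriv_orthogonal[of n n Q] Q by (cases "Q = 0") auto
  then have "legendre_weight n c = poly_integral (?L * ?L)"
    by (simp add: H_def poly_integral_diff legendre_weight_def)
  also have "\<dots> \<ge> 0"
    unfolding poly_integral_def by (intro integral_nonneg integrable_poly) auto
  finally show ?thesis .
qed

definition gl_node :: "real \<Rightarrow> real \<Rightarrow> real \<Rightarrow> real" where
  "gl_node a b c = (a + b) / 2 + (b - a) / 2 * c"

lemma gl_node_mem:
  assumes "a \<le> b" "-1 \<le> c" "c \<le> 1"
  shows "gl_node a b c \<in> {a..b}"
proof -
  have "0 \<le> (b - a) * (1 + c)" "0 \<le> (b - a) * (1 - c)"
    using assms by simp_all
  moreover have "gl_node a b c - a = (b - a) * (1 + c) / 2" "b - gl_node a b c = (b - a) * (1 - c) / 2"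
    by (simp_all add: gl_node_def field_simps)
  ultimately show ?thesis
    by simp
qed

lemma gl_node_mono_left:
  assumes "t \<le> s" "c \<le> 1"
  shows "gl_node t b c \<le> gl_node s b c"
proof -
  have "gl_node s b c - gl_node t b c = (s - t) * (1 - c) / 2"
    by (simp add: gl_node_def field_simps)
  moreover have "0 \<le> (s - t) * (1 - c) / 2"
    using assms by simp
  ultimately show ?thesis
    by linarith
qed

lemma gl_weight_node:
  assumes ab: "a < b" and c: "c \<in> legendre_roots n"
  shows "gl_weight n a b (gl_node a b c) = (b - a) / 2 * legendre_weight n c"
proof -
  let ?R = "legendre_roots n"
  let ?L = "lagrange_basis ?R c"
  define r where "r = gl_node a b c"
  define m where "m = 2 / (b - a)"
  define c0 where "c0 = - (a + b) / (b - a)"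
  have ba: "b - a > 0"
    using ab by simp
  have k: "(b - a) * m = 2" "(b - a) * c0 = - (a + b)"
    using ba by (simp_all add: m_def c0_def field_simps)
  have cr: "(2 * r - (a + b)) / (b - a) = c"
    unfolding r_def gl_node_def using ba by (simp add: field_simps)
  have integrand: "(\<Prod>d\<in>?R - {c}. (2 * x - (b - a) * d - (a + b)) / (2 * r - (b - a) * d - (a + b)))
      = poly ?L (m * x + c0)" for x
    unfolding poly_lagrange_basis
  proof (rule prod.cong)
    fix d assume "d \<in> ?R - {c}"
    then have "c - d \<noteq> 0"
      by auto
    moreover have "2 * r - (b - a) * d - (a + b) = (b - a) * (c - d)"
      by (simp add: r_def gl_node_def field_simps)
    moreover have "(b - a) * (m * x + c0 - d) = ((b - a) * m) * x + (b - a) * c0 - (b - a) * d"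
      by (simp add: algebra_simps)
    then have "2 * x - (b - a) * d - (a + b) = (b - a) * (m * x + c0 - d)"
      unfolding k by simp
    ultimately show "(2 * x - (b - a) * d - (a + b)) / (2 * r - (b - a) * d - (a + b))
        = (m * x + c0 - d) / (c - d)"
      using ba by simp
  qed simp
  have affine: "((\<lambda>x. poly ?L (m *\<^sub>R x + c0)) has_integral (poly_integral ?L /\<^sub>R m ^ DIM(real)))
      (cbox ((-1 - c0) /\<^sub>R m) ((1 - c0) /\<^sub>R m))"
    using has_integral_poly_integral ba
    by (intro has_integral_affinity') (auto simp: m_def cbox_interval)
  have "(-1 - c0) /\<^sub>R m = a" "(1 - c0) /\<^sub>R m = b"
    "poly_integral ?L /\<^sub>R m ^ DIM(real) = (b - a) / 2 * legendre_weight n c"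
    using ba by (simp_all add: m_def c0_def legendre_weight_def field_simps)
  with affine have "((\<lambda>x. poly ?L (m * x + c0)) has_integral ((b - a) / 2 * legendre_weight n c)) {a..b}"
    by (simp only: real_scaleR_def cbox_interval)
  then show ?thesis
    unfolding gl_weight_def r_def[symmetric] cr integrand using ab c by (simp add: integral_unique)
qed

lemma gl_sum_eq_sum_legendre_roots:
  assumes ab: "a < b"
  shows "gl_sum n a b \<psi> =
    (\<Sum>c\<in>legendre_roots n. ereal ((b - a) / 2 * legendre_weight n c) * \<psi> (gl_node a b c))"
proof -
  let ?R = "legendre_roots n"
  define g where "g r = ereal (gl_weight n a b r) * \<psi> r" for r
  define A where "A = {r \<in> {a..b}. gl_weight n a b r \<noteq> 0}"
  have "inj_on (gl_node a b) ?R"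
    using ab by (intro inj_onI) (simp add: gl_node_def)
  moreover have "A \<subseteq> gl_node a b ` ?R"
  proof
    fix r assume r: "r \<in> A"
    define c where "c = (2 * r - (a + b)) / (b - a)"
    have "c \<in> ?R"
      using r unfolding A_def gl_weight_def c_def by (auto split: if_splits)
    moreover have "r = gl_node a b c"
      unfolding gl_node_def c_def using ab by (simp add: field_simps)
    ultimately show "r \<in> gl_node a b ` ?R"
      by blast
  qed
  moreover have "g r = 0" if r: "r \<in> gl_node a b ` ?R - A" for r
  proof -
    obtain c where "c \<in> ?R" "r = gl_node a b c"
      using r by blast
    moreover have "gl_node a b c \<in> {a..b}"
      using \<open>c \<in> ?R\<close> ab legendre_roots_subset[of n] by (intro gl_node_mem) auto
    ultimately have "r \<in> {a..b}"
      by simp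
    then show ?thesis
      using r by (simp add: A_def g_def)
  qed
  ultimately have "sum g A = sum (g \<circ> gl_node a b) ?R"
    using finite_legendre_roots[of n]
    by (simp add: sum.mono_neutral_left[of "gl_node a b ` ?R" A g] sum.reindex)
  then show ?thesis
    by (simp add: gl_sum_def A_def g_def gl_weight_node[OF ab])
qed

theorem lemma3p1:
  fixes T s t :: real and n :: nat and \<psi> :: "real \<Rightarrow> ereal"
  assumes "0 < T" and "0 \<le> s" and "s < T" and "0 \<le> t" and "t \<le> s"
    and "\<And>r. r \<in> {0..T} \<Longrightarrow> 0 \<le> \<psi> r"
    and "\<And>x y. x \<in> {0..T} \<Longrightarrow> y \<in> {0..T} \<Longrightarrow> x \<le> y \<Longrightarrow> \<psi> y \<le> \<psi> x"
  shows "gl_sum n s T \<psi> \<le> gl_sum n t T \<psi>"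
  unfolding gl_sum_eq_sum_legendre_roots[OF \<open>s < T\<close>]
    gl_sum_eq_sum_legendre_roots[OF order.strict_trans1[OF \<open>t \<le> s\<close> \<open>s < T\<close>]]
proof (rule sum_mono)
  fix c assume c: "c \<in> legendre_roots n"
  then have "-1 \<le> c" "c \<le> 1"
    using legendre_roots_subset[of n] by auto
  then have nodes: "gl_node s T c \<in> {0..T}" "gl_node t T c \<in> {0..T}"
    "gl_node t T c \<le> gl_node s T c"
    using gl_node_mem[of s T c] gl_node_mem[of t T c] gl_node_mono_left[OF \<open>t \<le> s\<close>] assms(2-5)
    by auto
  have "0 \<le> (T - s) / 2 * legendre_weight n c" "(T - s) / 2 * legendre_weight n c \<le> (T - t) / 2 * legendre_weight n c"
    using legendre_weight_nonneg[OF c] assms(3,5) by (auto intro: mult_right_mono)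
  then show "ereal ((T - s) / 2 * legendre_weight n c) * \<psi> (gl_node s T c)
      \<le> ereal ((T - t) / 2 * legendre_weight n c) * \<psi> (gl_node t T c)"
    using assms(6,7) nodes by (intro ereal_mult_mono') auto
qed

end
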